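(* Let $\mathcal{O}$ be an oriented matroid of rank $r$ on $E$, $f\in E$, $I=[e_1,\dots,e_k]$ ($k\le r$) an ordered set of independent elements (possibly $f\in I$), and $\mathcal{O}'=\mathcal{O}\cup p=\mathcal{O}[e_1^+,\dots,e_k^+]$. Let $X,Y$ be conformal cocircuits of $\mathcal{O}'$ with $X_p=Y_p\neq 0$ and $X\circ Y$ an edge of $\mathcal{O}'$, with $Y_f\neq 0$, and suppose the index $i$ of $X$ and the index $j$ of $Y$ with respect to $I$ satisfy $1\le i<j\le k$. Then $\mathrm{Dir}_{(\mathcal{O}',p,f)}(X,Y)=\mathrm{Dir}_{(\mathcal{O}',e_i,f)}(X,Y)=Y_f$.
   Context: Oriented matroid $\mathcal{O}$ of rank $r$ on finite $E$, given by its cocircuits (sign vectors in $\{+,-,0\}^E$). Notation: $z(X)$ zero set, $\operatorname{sep}(X,Y)=\{e:X_e=-Y_e\ne0\}$, $(X\circ Y)_e=X_e$ if $X_e\ne0$, else $Y_e$; conformal means $\operatorname{sep}=\emptyset$. An edge is a covector whose zero set is a flat of rank $r-2$; cocircuits $X\ne\pm Y$ are comodular if $X\circ Y$ is an edge. For comodular $X,Y$ and $e\in\operatorname{sep}(X,Y)$, cocircuit elimination of $e$ between $X$ and $Y$ yields the unique cocircuit $Z$ with $Z_e=0$ and $Z_h=(X\circ Y)_h$ for $h\notin\operatorname{sep}(X,Y)$. For an oriented matroid $\mathcal{Q}$ on ground set $E'$, distinct $a,b\in E'$ and comodular cocircuits $X,Y$ of $\mathcal{Q}$ with $X_a=Y_a\ne0$,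 let $Z$ be obtained by eliminating $a$ between $-X$ and $Y$ and set $\mathrm{Dir}_{(\mathcal{Q},a,b)}(X,Y)=Z_b$; if $X_a\ne0$ and $Y_a=0$ set $\mathrm{Dir}_{(\mathcal{Q},a,b)}(X,Y)=Y_b$, and if $X_a=0$, $Y_a\neq 0$ set it to $-X_b$. The index of a cocircuit $Y$ w.r.t. $I=[e_1,\dots,e_k]$ is the smallest $i$ with $Y_{e_i}\ne0$, or $k+1$ if none. The positive lexicographic extension $\mathcal{O}[e_1^+,\dots,e_k^+]=\mathcal{O}\cup p$ is the single-element extension with localization $\sigma(Y)=Y_{e_i}$ if the index $i$ of $Y$ is $\le k$, and $\sigma(Y)=0$ otherwise. *)

theory Defs
  imports Main
begin

datatype sign = Neg | Zer | Pos

fun neg_sign :: "sign \<Rightarrow> sign" where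
  "neg_sign Neg = Pos" | "neg_sign Zer = Zer" | "neg_sign Pos = Neg"

type_synonym 'e svec = "'e \<Rightarrow> sign"

definition zerov :: "'e svec" where "zerov = (\<lambda>e. Zer)"

definition negv :: "'e svec \<Rightarrow> 'e svec" where "negv X = (\<lambda>e. neg_sign (X e))"

definition supp :: "'e svec \<Rightarrow> 'e set" where "supp X = {e. X e \<noteq> Zer}"

definition zset :: "'e set \<Rightarrow> 'e svec \<Rightarrow> 'e set" where "zset E X = {e \<in> E. X e = Zer}"

definition sep :: "'e svec \<Rightarrow> 'e svec \<Rightarrow> 'e set" where
  "sep X Y = {e. X e \<noteq> Zer \<and> X e = neg_sign (Y e)}"

definition comp :: "'e svec \<Rightarrow> 'e svec \<Rightarrow> 'e svec" where
  "comp X Y = (\<lambda>e. if X e \<noteq> Zer then X e else Y e)"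

definition conformal :: "'e svec \<Rightarrow> 'e svec \<Rightarrow> bool" where
  "conformal X Y \<longleftrightarrow> sep X Y = {}"

definition oriented_matroid :: "'e set \<Rightarrow> 'e svec set \<Rightarrow> bool" where
  "oriented_matroid E C \<longleftrightarrow>
     finite E \<and>
     (\<forall>X\<in>C. \<forall>e. e \<notin> E \<longrightarrow> X e = Zer) \<and>
     zerov \<notin> C \<and>
     (\<forall>X\<in>C. negv X \<in> C) \<and>
     (\<forall>X\<in>C. \<forall>Y\<in>C. supp X \<subseteq> supp Y \<longrightarrow> X = Y \<or> X = negv Y) \<and>
     (\<forall>X\<in>C. \<forall>Y\<in>C. \<forall>e. X \<noteq> negv Y \<and> e \<in> sep X Y \<longrightarrow>
        (\<exists>Z\<in>C. Z e = Zer \<and> (\<forall>g. Z g = Pos \<longrightarrow> X g = Pos \<or> Y g = Pos)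
                          \<and> (\<forall>g. Z g = Neg \<longrightarrow> X g = Neg \<or> Y g = Neg)))"

inductive_set covectors :: "'e svec set \<Rightarrow> 'e svec set" for C where
  zero: "zerov \<in> covectors C"
| step: "X \<in> C \<Longrightarrow> V \<in> covectors C \<Longrightarrow> comp X V \<in> covectors C"

text \<open>Underlying matroid: bases are the minimal transversals of the cocircuit supports.\<close>
definition is_basis :: "'e set \<Rightarrow> 'e svec set \<Rightarrow> 'e set \<Rightarrow> bool" where
  "is_basis E C B \<longleftrightarrow> B \<subseteq> E \<and> (\<forall>X\<in>C. B \<inter> supp X \<noteq> {}) \<and>
     (\<forall>B'. B' \<subset> B \<longrightarrow> (\<exists>X\<in>C. B' \<inter> supp X = {}))"

definition indep :: "'e set \<Rightarrow> 'e svec set \<Rightarrow> 'e set \<Rightarrow> bool" where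
  "indep E C A \<longleftrightarrow> (\<exists>B. is_basis E C B \<and> A \<subseteq> B)"

definition mrank :: "'e set \<Rightarrow> 'e svec set \<Rightarrow> 'e set \<Rightarrow> nat" where
  "mrank E C A = Max (card ` {J. J \<subseteq> A \<and> indep E C J})"

definition om_rank :: "'e set \<Rightarrow> 'e svec set \<Rightarrow> nat" where
  "om_rank E C = mrank E C E"

definition is_flat :: "'e set \<Rightarrow> 'e svec set \<Rightarrow> 'e set \<Rightarrow> bool" where
  "is_flat E C F \<longleftrightarrow> F \<subseteq> E \<and> (\<forall>e\<in>E - F. mrank E C (insert e F) > mrank E C F)"

definition is_edge :: "'e set \<Rightarrow> 'e svec set \<Rightarrow> 'e svec \<Rightarrow> bool" where
  "is_edge E C V \<longleftrightarrow> V \<in> covectors C \<and> is_flat E C (zset E V) \<and>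
     mrank E C (zset E V) + 2 = om_rank E C"

definition elim :: "'e svec set \<Rightarrow> 'e \<Rightarrow> 'e svec \<Rightarrow> 'e svec \<Rightarrow> 'e svec" where
  "elim C e X Y = (THE Z. Z \<in> C \<and> Z e = Zer \<and> (\<forall>h. h \<notin> sep X Y \<longrightarrow> Z h = comp X Y h))"

definition Dir :: "'e svec set \<Rightarrow> 'e \<Rightarrow> 'e \<Rightarrow> 'e svec \<Rightarrow> 'e svec \<Rightarrow> sign" where
  "Dir C a b X Y =
     (if X a = Y a \<and> X a \<noteq> Zer then elim C a (negv X) Y b
      else if X a \<noteq> Zer \<and> Y a = Zer then Y b
      else if X a = Zer \<and> Y a \<noteq> Zer then neg_sign (X b)
      else undefined)"

text \<open>1-based index of Y w.r.t. I = [e_1,...,e_k]; k+1 if Y vanishes on all e_i.\<close>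
definition cc_index :: "'e list \<Rightarrow> 'e svec \<Rightarrow> nat" where
  "cc_index I Y = (if \<exists>i<length I. Y (I ! i) \<noteq> Zer
                   then Suc (LEAST i. i < length I \<and> Y (I ! i) \<noteq> Zer)
                   else Suc (length I))"

definition lex_sigma :: "'e list \<Rightarrow> 'e svec \<Rightarrow> sign" where
  "lex_sigma I Y = (if cc_index I Y \<le> length I then Y (I ! (cc_index I Y - 1)) else Zer)"

definition restr :: "'e set \<Rightarrow> 'e svec \<Rightarrow> 'e svec" where
  "restr E X = (\<lambda>e. if e \<in> E then X e else Zer)"

definition deletion_cocircuits :: "'e set \<Rightarrow> 'e svec set \<Rightarrow> 'e svec set" where
  "deletion_cocircuits E C' =
     (let D = {restr E X | X. X \<in> C' \<and> restr E X \<noteq> zerov}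
      in {V \<in> D. \<forall>W\<in>D. supp W \<subseteq> supp V \<longrightarrow> supp W = supp V})"

definition ext_vec :: "'e set \<Rightarrow> 'e \<Rightarrow> 'e svec \<Rightarrow> sign \<Rightarrow> 'e svec" where
  "ext_vec E p Y s = (\<lambda>e. if e \<in> E then Y e else if e = p then s else Zer)"

definition single_element_extension ::
  "'e set \<Rightarrow> 'e svec set \<Rightarrow> 'e \<Rightarrow> ('e svec \<Rightarrow> sign) \<Rightarrow> 'e svec set \<Rightarrow> bool" where
  "single_element_extension E C p \<sigma> C' \<longleftrightarrow>
     p \<notin> E \<and> oriented_matroid (insert p E) C' \<and>
     om_rank (insert p E) C' = om_rank E C \<and>
     deletion_cocircuits E C' = C \<and>
     (\<forall>Y\<in>C. ext_vec E p Y (\<sigma> Y) \<in> C')"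

definition lex_extension :: "'e set \<Rightarrow> 'e svec set \<Rightarrow> 'e list \<Rightarrow> 'e \<Rightarrow> 'e svec set \<Rightarrow> bool" where
  "lex_extension E C I p C' \<longleftrightarrow> single_element_extension E C p (lex_sigma I) C'"

end

theory Submission
  imports Defs
begin

text \<open>Write \<open>a = e\<^sub>i\<close>; then \<open>X\<^sub>a \<noteq> 0 = Y\<^sub>a\<close>, so \<open>Dir\<close> at \<open>a\<close> is \<open>Y\<^sub>f\<close> by definition.
  Since \<open>X \<circ> Y\<close> is an edge, two cocircuits vanishing on its zero set \<open>F\<close> and on one more
  point of its support agree up to sign. This pins down the elimination \<open>Z\<close> of \<open>p\<close> between
  \<open>-X\<close> and \<open>Y\<close>, with \<open>Z\<^sub>a = -X\<^sub>a\<close>, and shows that a cocircuit \<open>W\<close> of the extension vanishing on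
  \<open>F \<union> {f}\<close> is, up to sign, the extension of a cocircuit of \<open>\<O>\<close>; if moreover \<open>W\<close> vanishes on
  \<open>e\<^sub>1, \<dots>, e\<^sub>i\<^sub>-\<^sub>1\<close>, the lexicographic localization gives \<open>W\<^sub>p = W\<^sub>a\<close> (and likewise \<open>X\<^sub>p = X\<^sub>a\<close>).
  If \<open>Z\<^sub>f = 0\<close>, this gives \<open>0 = Z\<^sub>p = Z\<^sub>a \<noteq> 0\<close>. If \<open>Z\<^sub>f = -Y\<^sub>f\<close>, eliminating \<open>f\<close> between \<open>Y\<close> and \<open>Z\<close>
  gives such a \<open>W\<close> with \<open>W\<^sub>p = W\<^sub>a = -X\<^sub>a = -X\<^sub>p\<close>, although \<open>W\<^sub>p \<in> {0, Y\<^sub>p}\<close>. Hence \<open>Z\<^sub>f = Y\<^sub>f\<close>.\<close>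

lemma neg_sign_neg_sign [simp]: "neg_sign (neg_sign s) = s"
  by (cases s) auto

lemma neg_sign_eq_iff [simp]: "neg_sign s = neg_sign t \<longleftrightarrow> s = t"
  by (cases s; cases t) auto

lemma neg_sign_eq_Zer_iff [simp]: "neg_sign s = Zer \<longleftrightarrow> s = Zer"
  by (cases s) auto

lemma neg_sign_eq_self_iff [simp]: "neg_sign s = s \<longleftrightarrow> s = Zer"
  by (cases s) auto

lemma negv_apply [simp]: "negv X e = neg_sign (X e)"
  by (simp add: negv_def)

lemma negv_negv [simp]: "negv (negv X) = X"
  by (rule ext) simp

lemma om_finite: "oriented_matroid E C \<Longrightarrow> finite E"
  by (simp add: oriented_matroid_def)

lemma om_outside: "oriented_matroid E C \<Longrightarrow> X \<in> C \<Longrightarrow> e \<notin> E \<Longrightarrow> X e = Zer"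
  by (simp add: oriented_matroid_def)

lemma om_nonzero:
  assumes OM: "oriented_matroid E C" and X: "X \<in> C"
  shows "\<exists>e\<in>E. X e \<noteq> Zer"
proof -
  have "X \<noteq> zerov" using OM X by (auto simp: oriented_matroid_def)
  then obtain e where "X e \<noteq> Zer" by (auto simp: zerov_def)
  with om_outside[OF OM X] show ?thesis by blast
qed

lemma om_negv: "oriented_matroid E C \<Longrightarrow> X \<in> C \<Longrightarrow> negv X \<in> C"
  by (simp add: oriented_matroid_def)

lemma om_supp_subset:
  "oriented_matroid E C \<Longrightarrow> X \<in> C \<Longrightarrow> Y \<in> C \<Longrightarrow> supp X \<subseteq> supp Y \<Longrightarrow> X = Y \<or> X = negv Y"
  by (simp add: oriented_matroid_def)

lemma om_elim:
  assumes "oriented_matroid E C" "X \<in> C" "Y \<in> C" "X \<noteq> negv Y" "e \<in> sep X Y"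
  obtains Z where "Z \<in> C" "Z e = Zer" "\<And>g. Z g \<noteq> Zer \<Longrightarrow> Z g = X g \<or> Z g = Y g"
proof -
  obtain Z where Z: "Z \<in> C" "Z e = Zer"
    and pos: "\<forall>g. Z g = Pos \<longrightarrow> X g = Pos \<or> Y g = Pos"
    and neg: "\<forall>g. Z g = Neg \<longrightarrow> X g = Neg \<or> Y g = Neg"
    using assms unfolding oriented_matroid_def by blast
  have "Z g = X g \<or> Z g = Y g" if "Z g \<noteq> Zer" for g
    using pos neg that by (cases "Z g") auto
  with Z show thesis by (rule that)
qed

lemma covector_outside:
  assumes OM: "oriented_matroid E C" and "V \<in> covectors C" and "e \<notin> E"
  shows "V e = Zer"
  using assms(2) by induction (use assms(3) om_outside[OF OM] in \<open>auto simp: zerov_def comp_def\<close>)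

lemma basis_exists:
  assumes OM: "oriented_matroid E C"
  obtains B where "is_basis E C B"
proof -
  let ?T = "{B. B \<subseteq> E \<and> (\<forall>X\<in>C. B \<inter> supp X \<noteq> {})}"
  have "E \<in> ?T"
    using om_nonzero[OF OM] by (fastforce simp: supp_def)
  then obtain B where B: "B \<in> ?T" and min: "\<And>B'. B' \<in> ?T \<Longrightarrow> card B \<le> card B'"
    using ex_has_least_nat[of "\<lambda>B. B \<in> ?T" E card] by blast
  have "finite B"
    using B om_finite[OF OM] finite_subset by blast
  have "\<exists>X\<in>C. B' \<inter> supp X = {}" if "B' \<subset> B" for B'
    using min[of B'] psubset_card_mono[OF \<open>finite B\<close> that] that B by fastforce
  with B have "is_basis E C B"
    by (simp add: is_basis_def)
  then show thesis by (rule that)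
qed

lemma basis_meets_cocircuit: "is_basis E C B \<Longrightarrow> X \<in> C \<Longrightarrow> \<exists>b\<in>B. X b \<noteq> Zer"
  by (auto simp: is_basis_def supp_def)

lemma indep_subset_ground: "indep E C J \<Longrightarrow> J \<subseteq> E"
  by (auto simp: indep_def is_basis_def)

lemma finite_indep_subsets: "oriented_matroid E C \<Longrightarrow> finite {J. J \<subseteq> A \<and> indep E C J}"
  by (rule finite_subset[of _ "Pow E"]) (auto dest: indep_subset_ground simp: om_finite)

lemma card_le_mrank:
  "oriented_matroid E C \<Longrightarrow> J \<subseteq> A \<Longrightarrow> indep E C J \<Longrightarrow> card J \<le> mrank E C A"
  unfolding mrank_def by (rule Max_ge) (auto intro: finite_imageI finite_indep_subsets)

lemma mrank_attained:
  assumes OM: "oriented_matroid E C"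
  obtains J where "J \<subseteq> A" "indep E C J" "card J = mrank E C A"
proof -
  obtain B where "is_basis E C B" using basis_exists[OF OM] .
  then have "{} \<in> {J. J \<subseteq> A \<and> indep E C J}" by (auto simp: indep_def)
  then have "mrank E C A \<in> card ` {J. J \<subseteq> A \<and> indep E C J}"
    unfolding mrank_def using finite_indep_subsets[OF OM] by (intro Max_in finite_imageI) blast+
  then show thesis using that by (auto simp: image_iff)
qed

lemma mrank_mono:
  assumes OM: "oriented_matroid E C" and "A \<subseteq> A'"
  shows "mrank E C A \<le> mrank E C A'"
proof -
  obtain J where "J \<subseteq> A" "indep E C J" "card J = mrank E C A"
    using mrank_attained[OF OM] .
  with assms show ?thesis using card_le_mrank[OF OM, of J A'] by simp
qed

lemma card_basis_le_om_rank: "oriented_matroid E C \<Longrightarrow> is_basis E C B \<Longrightarrow> card B \<le> om_rank E C"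
  unfolding om_rank_def by (erule card_le_mrank) (auto simp: is_basis_def indep_def)

lemma corank_one_basis:
  assumes OM: "oriented_matroid E C" and rk: "om_rank E C \<le> mrank E C G + 1"
  obtains B b where "is_basis E C B" "B \<subseteq> insert b G"
proof -
  obtain J where J: "J \<subseteq> G" "indep E C J" "card J = mrank E C G"
    using mrank_attained[OF OM] .
  then obtain B where B: "is_basis E C B" "J \<subseteq> B"
    by (auto simp: indep_def)
  have "finite B"
    using B(1) om_finite[OF OM] by (auto simp: is_basis_def intro: finite_subset)
  have "card (B - J) \<le> 1"
    using card_Diff_subset[of J B] finite_subset[OF B(2) \<open>finite B\<close>] B(2)
      card_basis_le_om_rank[OF OM B(1)] J(3) rk by linarith
  then have "\<forall>x\<in>B - J. \<forall>y\<in>B - J. x = y"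
    using card_le_Suc0_iff_eq[of "B - J"] \<open>finite B\<close> by simp
  then obtain b where "B - J \<subseteq> {b}"
    by (cases "B - J = {}") blast+
  with B J(1) have "B \<subseteq> insert b G" by blast
  with B(1) show thesis by (rule that)
qed

subsection \<open>Rigidity of cocircuits\<close>

lemma cocircuits_vanishing_eq_or_neg:
  assumes OM: "oriented_matroid E C" and Z1: "Z1 \<in> C" and Z2: "Z2 \<in> C"
    and van1: "\<And>g. g \<in> G \<Longrightarrow> Z1 g = Zer" and van2: "\<And>g. g \<in> G \<Longrightarrow> Z2 g = Zer"
    and rk: "om_rank E C \<le> mrank E C G + 1"
  shows "Z1 = Z2 \<or> Z1 = negv Z2"
proof (rule ccontr)
  assume ne: "\<not> (Z1 = Z2 \<or> Z1 = negv Z2)"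
  obtain B b where B: "is_basis E C B" "B \<subseteq> insert b G"
    using corank_one_basis[OF OM rk] .
  have only_b: "x = b" if "x \<in> B" "U x \<noteq> Zer" "\<And>g. g \<in> G \<Longrightarrow> U g = Zer" for U x
    using that B(2) by blast
  have "Z1 b \<noteq> Zer" "Z2 b \<noteq> Zer"
    using basis_meets_cocircuit[OF B(1)] only_b van1 van2 Z1 Z2 by metis+
  \<comment> \<open>orient \<open>Z2\<close> so that \<open>b\<close> separates it from \<open>Z1\<close>\<close>
  define Z2' where "Z2' = (if Z1 b = neg_sign (Z2 b) then Z2 else negv Z2)"
  have "Z2' \<in> C" "Z1 \<noteq> negv Z2'" "b \<in> sep Z1 Z2'"
    using Z2 om_negv[OF OM Z2] ne \<open>Z1 b \<noteq> Zer\<close> \<open>Z2 b \<noteq> Zer\<close>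
    by (auto simp: Z2'_def sep_def) (cases "Z1 b"; cases "Z2 b"; simp)
  then obtain W where W: "W \<in> C" "W b = Zer" "\<And>g. W g \<noteq> Zer \<Longrightarrow> W g = Z1 g \<or> W g = Z2' g"
    using om_elim[OF OM Z1] by blast
  have "W g = Zer" if "g \<in> G" for g
    using W(3)[of g] van1[OF that] van2[OF that] by (cases "Z1 b = neg_sign (Z2 b)") (auto simp: Z2'_def)
  then show False
    using basis_meets_cocircuit[OF B(1) W(1)] only_b W(2) by metis
qed

lemma edge_corank_one:
  assumes OM: "oriented_matroid E C" and edge: "is_edge E C V" and Vh: "V h \<noteq> Zer"
    and G: "insert h (zset E V) \<subseteq> G"
  shows "om_rank E C \<le> mrank E C G + 1"
proof -
  have "h \<in> E"
    using covector_outside[OF OM] edge Vh by (auto simp: is_edge_def)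
  then have "mrank E C (zset E V) < mrank E C (insert h (zset E V))"
    using edge Vh by (auto simp: is_edge_def is_flat_def zset_def)
  also have "\<dots> \<le> mrank E C G"
    by (rule mrank_mono[OF OM G])
  finally show ?thesis
    using edge by (simp add: is_edge_def)
qed

lemma edge_cocircuits_eq_or_neg:
  assumes OM: "oriented_matroid E C" and edge: "is_edge E C V" and Vh: "V h \<noteq> Zer"
    and Z1: "Z1 \<in> C" and Z2: "Z2 \<in> C"
    and van1: "\<And>g. g \<in> insert h (zset E V) \<Longrightarrow> Z1 g = Zer"
    and van2: "\<And>g. g \<in> insert h (zset E V) \<Longrightarrow> Z2 g = Zer"
  shows "Z1 = Z2 \<or> Z1 = negv Z2"
  using cocircuits_vanishing_eq_or_neg[OF OM Z1 Z2 van1 van2 edge_corank_one[OF OM edge Vh order_refl]] .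

subsection \<open>Elimination between conformal cocircuits on an edge\<close>

lemma conformal_not_sep_neg:
  assumes "conformal X Y" and "h \<notin> sep (negv X) Y"
  shows "X h = Zer \<or> Y h = Zer"
proof -
  have "h \<notin> sep X Y" using assms(1) by (simp add: conformal_def)
  with assms(2) show ?thesis by (cases "X h"; cases "Y h") (auto simp: sep_def)
qed

lemma conformal_edge_elim_exists:
  assumes OM: "oriented_matroid E C" and XC: "X \<in> C" and YC: "Y \<in> C"
    and conf: "conformal X Y" and XY: "X \<noteq> Y" and edge: "is_edge E C (comp X Y)"
    and Xe: "X e = Y e" "X e \<noteq> Zer"
  obtains Z where "Z \<in> C" "Z e = Zer" "\<And>h. h \<notin> sep (negv X) Y \<Longrightarrow> Z h = comp (negv X) Y h"
proof -
  have "negv X \<noteq> negv Y" "e \<in> sep (negv X) Y"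
    using XY Xe by (metis negv_negv, simp add: sep_def)
  then obtain Z where Z: "Z \<in> C" "Z e = Zer" and Zval: "\<And>g. Z g \<noteq> Zer \<Longrightarrow> Z g = negv X g \<or> Z g = Y g"
    using om_elim[OF OM om_negv[OF OM XC] YC] by metis
  have Z0: "Z g = Zer" if "X g = Zer" "Y g = Zer" for g
    using Zval[of g] that by auto
  have "Z h = comp (negv X) Y h" if h: "h \<notin> sep (negv X) Y" for h
  proof (cases "X h = Zer \<and> Y h = Zer")
    case True
    then show ?thesis using Z0 by (simp add: comp_def)
  next
    case False
    obtain W where W: "W \<in> {X, Y}" "W h = Zer"
      using conformal_not_sep_neg[OF conf h] by blast
    have "Z h \<noteq> Zer"
    proof
      assume "Z h = Zer"
      then have "Z = W \<or> Z = negv W"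
        using W Z0 False Z(1) XC YC
        by (intro edge_cocircuits_eq_or_neg[OF OM edge, of h])
           (auto simp: comp_def zset_def split: if_splits)
      then show False using Z(2) Xe W by auto
    qed
    then show ?thesis
      using Zval[of h] conformal_not_sep_neg[OF conf h] False by (auto simp: comp_def)
  qed
  with Z show thesis by (rule that)
qed

lemma conformal_edge_elim:
  assumes OM: "oriented_matroid E C" and XC: "X \<in> C" and YC: "Y \<in> C"
    and conf: "conformal X Y" and XY: "X \<noteq> Y" and edge: "is_edge E C (comp X Y)"
    and Xe: "X e = Y e" "X e \<noteq> Zer"
  shows "elim C e (negv X) Y \<in> C" "elim C e (negv X) Y e = Zer"
    and "h \<notin> sep (negv X) Y \<Longrightarrow> elim C e (negv X) Y h = comp (negv X) Y h"
proof -
  obtain Z where Z: "Z \<in> C" "Z e = Zer" "\<And>h. h \<notin> sep (negv X) Y \<Longrightarrow> Z h = comp (negv X) Y h"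
    using conformal_edge_elim_exists[OF assms] by blast
  obtain d where "X d \<noteq> Y d" using XY by blast
  then have d: "d \<notin> sep (negv X) Y" "comp (negv X) Y d \<noteq> Zer"
    by (auto simp: sep_def comp_def)
  have spec_zero: "U g = Zer"
    if "\<And>h. h \<notin> sep (negv X) Y \<Longrightarrow> U h = comp (negv X) Y h" "g \<in> zset E (comp X Y)" for U g
  proof -
    have "X g = Zer" "Y g = Zer"
      using that(2) by (auto simp: zset_def comp_def split: if_splits)
    then show ?thesis using that(1)[of g] by (simp add: sep_def comp_def)
  qed
  have "Z' = Z"
    if Z': "Z' \<in> C" "Z' e = Zer" "\<forall>h. h \<notin> sep (negv X) Y \<longrightarrow> Z' h = comp (negv X) Y h" for Z'
  proof -
    have "Z' = Z \<or> Z' = negv Z"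
      using Z(1,2) Z'(1,2) Xe spec_zero[OF Z(3)] spec_zero[of Z', OF Z'(3)[rule_format]]
      by (intro edge_cocircuits_eq_or_neg[OF OM edge, of e]) (auto simp: comp_def)
    then show ?thesis
      using Z(3)[OF d(1)] Z'(3) d by auto
  qed
  moreover have "Z \<in> C \<and> Z e = Zer \<and> (\<forall>h. h \<notin> sep (negv X) Y \<longrightarrow> Z h = comp (negv X) Y h)"
    using Z by blast
  ultimately have "elim C e (negv X) Y = Z"
    unfolding elim_def by (intro the_equality) blast+
  with Z show "elim C e (negv X) Y \<in> C" "elim C e (negv X) Y e = Zer"
    and "h \<notin> sep (negv X) Y \<Longrightarrow> elim C e (negv X) Y h = comp (negv X) Y h"
    by simp_all
qed

subsection \<open>Localizations of single-element extensions\<close>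

lemma deletion_cocircuit_below:
  assumes "finite E" "W \<in> C'" "restr E W \<noteq> zerov"
  obtains V where "V \<in> deletion_cocircuits E C'" "supp V \<subseteq> supp (restr E W)"
proof -
  define D where "D = {restr E X | X. X \<in> C' \<and> restr E X \<noteq> zerov}"
  let ?M = "{V \<in> D. supp V \<subseteq> supp (restr E W)}"
  have "restr E W \<in> ?M"
    using assms by (auto simp: D_def)
  then obtain V where V: "V \<in> ?M" and min: "\<And>U. U \<in> ?M \<Longrightarrow> card (supp V) \<le> card (supp U)"
    using ex_has_least_nat[of "\<lambda>V. V \<in> ?M" _ "\<lambda>V. card (supp V)"] by blast
  have "finite (supp V)"
    using V assms(1) by (auto simp: D_def supp_def restr_def intro: finite_subset)
  have "supp U = supp V" if "U \<in> D" "supp U \<subseteq> supp V" for U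
    using min[of U] V that card_subset_eq[OF \<open>finite (supp V)\<close>] card_mono[OF \<open>finite (supp V)\<close>]
    by (metis (mono_tags, lifting) dual_order.trans le_antisym mem_Collect_eq)
  then have "V \<in> deletion_cocircuits E C'"
    using V by (simp add: deletion_cocircuits_def D_def)
  with V show thesis using that by blast
qed

lemma deletion_cocircuit_outside: "V \<in> deletion_cocircuits E C' \<Longrightarrow> e \<notin> E \<Longrightarrow> V e = Zer"
  by (auto simp: deletion_cocircuits_def restr_def)

text \<open>By \<open>uniq\<close>, \<open>W\<close> is, up to sign, the extension of a cocircuit of the deletion.\<close>

lemma extension_sign_eq_localization:
  assumes SE: "single_element_extension E C p \<sigma> C'"
    and odd: "\<And>V. \<sigma> (negv V) = neg_sign (\<sigma> V)"
    and WC: "W \<in> C'" and Wnz: "restr E W \<noteq> zerov"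
    and uniq: "\<And>W'. W' \<in> C' \<Longrightarrow> supp W' \<subseteq> insert p (supp W) \<Longrightarrow> W' = W \<or> W' = negv W"
  shows "W p = \<sigma> (restr E W)"
proof -
  have pE: "p \<notin> E" and OM': "oriented_matroid (insert p E) C'"
    and del: "deletion_cocircuits E C' = C" and extc: "\<forall>V\<in>C. ext_vec E p V (\<sigma> V) \<in> C'"
    using SE unfolding single_element_extension_def by blast+
  obtain V where V: "V \<in> C" "supp V \<subseteq> supp (restr E W)"
    using deletion_cocircuit_below[OF _ WC Wnz] om_finite[OF OM'] del by auto
  have VE: "V e = Zer" if "e \<notin> E" for e
    using deletion_cocircuit_outside[of V E C' e] V(1) del that by simp
  let ?U = "ext_vec E p V (\<sigma> V)"
  have "supp ?U \<subseteq> insert p (supp W)"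
  proof
    fix x assume "x \<in> supp ?U"
    then show "x \<in> insert p (supp W)"
      using V(2) by (cases "x \<in> E") (auto simp: supp_def ext_vec_def restr_def split: if_splits)
  qed
  then have "?U = W \<or> ?U = negv W"
    using uniq bspec[OF extc V(1)] by blast
  then have "W = ?U \<or> W = negv ?U"
    by auto
  then show ?thesis
  proof
    assume W: "W = ?U"
    have "restr E W = V"
      unfolding W using VE by (intro ext) (simp add: restr_def ext_vec_def)
    then show ?thesis using pE by (simp add: W ext_vec_def)
  next
    assume W: "W = negv ?U"
    have "restr E W = negv V"
      unfolding W using VE by (intro ext) (simp add: restr_def ext_vec_def)
    then show ?thesis using pE odd by (simp add: W ext_vec_def)
  qed
qed

subsection \<open>Lexicographic extensions\<close>

lemma cc_index_first_nonzero:
  assumes "cc_index I V \<le> length I"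
  shows "V (I ! (cc_index I V - 1)) \<noteq> Zer" and "l < cc_index I V - 1 \<Longrightarrow> V (I ! l) = Zer"
proof -
  have ex: "\<exists>l<length I. V (I ! l) \<noteq> Zer"
    using assms by (auto simp: cc_index_def split: if_splits)
  let ?L = "LEAST l. l < length I \<and> V (I ! l) \<noteq> Zer"
  have idx: "cc_index I V - 1 = ?L"
    using ex by (simp add: cc_index_def)
  show "V (I ! (cc_index I V - 1)) \<noteq> Zer"
    unfolding idx using LeastI_ex[OF ex] by simp
  show "V (I ! l) = Zer" if "l < cc_index I V - 1"
    using that not_less_Least[of l] LeastI_ex[OF ex] unfolding idx by force
qed

lemma lex_sigma_eq_nth:
  assumes "m < length I" "V (I ! m) \<noteq> Zer" "\<And>l. l < m \<Longrightarrow> V (I ! l) = Zer"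
  shows "lex_sigma I V = V (I ! m)"
proof -
  have "(LEAST l. l < length I \<and> V (I ! l) \<noteq> Zer) = m"
    using assms by (intro Least_equality) (auto simp: not_less[symmetric])
  then have "cc_index I V = Suc m"
    using assms by (auto simp: cc_index_def)
  then show ?thesis
    using assms(1) by (simp add: lex_sigma_def)
qed

lemma lex_sigma_negv: "lex_sigma I (negv V) = neg_sign (lex_sigma I V)"
  by (simp add: lex_sigma_def cc_index_def)

lemma lex_extension_sign_eq_nth:
  assumes ext: "lex_extension E C I p C'" and IE: "set I \<subseteq> E"
    and m: "m < length I" and Wm: "W (I ! m) \<noteq> Zer" and before: "\<And>l. l < m \<Longrightarrow> W (I ! l) = Zer"
    and WC: "W \<in> C'"
    and uniq: "\<And>W'. W' \<in> C' \<Longrightarrow> supp W' \<subseteq> insert p (supp W) \<Longrightarrow> W' = W \<or> W' = negv W"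
  shows "W p = W (I ! m)"
proof -
  have onI: "restr E W (I ! l) = W (I ! l)" if "l < length I" for l
    using IE nth_mem[OF that] by (auto simp: restr_def)
  have "restr E W \<noteq> zerov"
  proof
    assume "restr E W = zerov"
    then have "restr E W (I ! m) = Zer" by (simp add: zerov_def)
    with onI[OF m] Wm show False by simp
  qed
  then have "W p = lex_sigma I (restr E W)"
    by (rule extension_sign_eq_localization[of E C p "lex_sigma I" C' W,
          OF ext[unfolded lex_extension_def] lex_sigma_negv WC _ uniq])
  also have "\<dots> = W (I ! m)"
    using lex_sigma_eq_nth[of m I "restr E W"] m Wm before onI by simp
  finally show ?thesis .
qed

lemma lex_extension_sign_on_edge:
  assumes ext: "lex_extension E C I p C'" and IE: "set I \<subseteq> E"
    and m: "m < length I" and Wm: "W (I ! m) \<noteq> Zer" and before: "\<And>l. l < m \<Longrightarrow> W (I ! l) = Zer"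
    and WC: "W \<in> C'"
    and edge: "is_edge (insert p E) C' V" and Vp: "V p \<noteq> Zer" and fE: "f \<in> E" and Vf: "V f \<noteq> Zer"
    and van: "\<And>g. g \<in> insert f (zset (insert p E) V) \<Longrightarrow> W g = Zer"
  shows "W p = W (I ! m)"
proof (rule lex_extension_sign_eq_nth[OF ext IE m Wm before WC])
  have OM': "oriented_matroid (insert p E) C'" and pE: "p \<notin> E"
    using ext by (auto simp: lex_extension_def single_element_extension_def)
  fix W' assume W'C: "W' \<in> C'" and sub: "supp W' \<subseteq> insert p (supp W)"
  have "p \<notin> insert f (zset (insert p E) V)"
    using pE fE Vp by (auto simp: zset_def)
  then have "W' g = Zer" if "g \<in> insert f (zset (insert p E) V)" for g
    using sub van[OF that] that by (auto simp: supp_def)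
  then show "W' = W \<or> W' = negv W"
    by (rule edge_cocircuits_eq_or_neg[OF OM' edge Vf W'C WC _ van])
qed

lemma lex_extension_sign_eq_nth_of_nonzero:
  assumes ext: "lex_extension E C I p C'" and IE: "set I \<subseteq> E"
    and m: "m < length I" and Wm: "W (I ! m) \<noteq> Zer" and before: "\<And>l. l < m \<Longrightarrow> W (I ! l) = Zer"
    and WC: "W \<in> C'" and Wp: "W p \<noteq> Zer"
  shows "W p = W (I ! m)"
proof (rule lex_extension_sign_eq_nth[OF ext IE m Wm before WC])
  have OM': "oriented_matroid (insert p E) C'"
    using ext by (simp add: lex_extension_def single_element_extension_def)
  fix W' assume "W' \<in> C'" "supp W' \<subseteq> insert p (supp W)"
  moreover have "insert p (supp W) = supp W" using Wp by (auto simp: supp_def)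
  ultimately show "W' = W \<or> W' = negv W" using om_supp_subset[OF OM' _ WC] by simp
qed

locale lex_extension_conformal_edge =
  fixes E :: "'e set" and C C' :: "'e svec set" and I :: "'e list" and p :: 'e
    and X Y :: "'e svec" and m :: nat
  assumes ext: "lex_extension E C I p C'" and IE: "set I \<subseteq> E" and m: "m < length I"
    and XC: "X \<in> C'" and YC: "Y \<in> C'" and conf: "conformal X Y"
    and edge: "is_edge (insert p E) C' (comp X Y)" and Xp: "X p = Y p" "X p \<noteq> Zer"
    and Xm: "X (I ! m) \<noteq> Zer" and Ym: "Y (I ! m) = Zer"
    and beforeX: "\<And>l. l < m \<Longrightarrow> X (I ! l) = Zer" and beforeY: "\<And>l. l < m \<Longrightarrow> Y (I ! l) = Zer"
begin

lemma om_extension: "oriented_matroid (insert p E) C'"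
  using ext by (simp add: lex_extension_def single_element_extension_def)

lemma elim_p:
  shows "elim C' p (negv X) Y \<in> C'" and "elim C' p (negv X) Y p = Zer"
    and "X g = Zer \<Longrightarrow> Y g = Zer \<Longrightarrow> elim C' p (negv X) Y g = Zer"
    and "elim C' p (negv X) Y (I ! m) = neg_sign (X (I ! m))"
proof -
  have "X \<noteq> Y" using Xm Ym by auto
  note Z = conformal_edge_elim[OF om_extension XC YC conf this edge Xp]
  show "elim C' p (negv X) Y \<in> C'" "elim C' p (negv X) Y p = Zer" by (fact Z(1), fact Z(2))
  show "X g = Zer \<Longrightarrow> Y g = Zer \<Longrightarrow> elim C' p (negv X) Y g = Zer"
    using Z(3)[of g] by (simp add: sep_def comp_def)
  show "elim C' p (negv X) Y (I ! m) = neg_sign (X (I ! m))"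
    using Z(3)[of "I ! m"] Xm Ym by (simp add: sep_def comp_def)
qed

lemma sign_on_edge_hyperplane:
  assumes fE: "f \<in> E" and Yf: "Y f \<noteq> Zer"
    and UC: "U \<in> C'" and Uf: "U f = Zer" and Um: "U (I ! m) \<noteq> Zer"
    and U0: "\<And>g. X g = Zer \<Longrightarrow> Y g = Zer \<Longrightarrow> U g = Zer"
  shows "U p = U (I ! m)"
proof -
  have edge_f: "comp X Y p \<noteq> Zer" "comp X Y f \<noteq> Zer"
    using Xp Yf by (auto simp: comp_def)
  show ?thesis
  proof (rule lex_extension_sign_on_edge[OF ext IE m Um _ UC edge edge_f(1) fE edge_f(2)])
    fix l assume "l < m"
    then show "U (I ! l) = Zer" using U0 beforeX beforeY by blast
  next
    fix g assume "g \<in> insert f (zset (insert p E) (comp X Y))"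
    then show "U g = Zer"
      using Uf U0 by (auto simp: zset_def comp_def split: if_splits)
  qed
qed

lemma elim_p_at_ne_Zer:
  assumes "f \<in> E" "Y f \<noteq> Zer"
  shows "elim C' p (negv X) Y f \<noteq> Zer"
proof
  assume Zf: "elim C' p (negv X) Y f = Zer"
  have "elim C' p (negv X) Y p = elim C' p (negv X) Y (I ! m)"
    by (rule sign_on_edge_hyperplane[OF assms elim_p(1) Zf _ elim_p(3)]) (use elim_p(4) Xm in simp)
  then show False
    using elim_p(2,4) Xm by (metis neg_sign_eq_Zer_iff)
qed

lemma elim_p_at_ne_neg:
  assumes fE: "f \<in> E" and Yf: "Y f \<noteq> Zer"
  shows "elim C' p (negv X) Y f \<noteq> neg_sign (Y f)"
proof
  let ?Z = "elim C' p (negv X) Y"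
  assume Zf: "?Z f = neg_sign (Y f)"
  have "Y \<noteq> negv ?Z"
    using elim_p(2) Xp by (metis negv_apply neg_sign_eq_Zer_iff)
  moreover have "f \<in> sep Y ?Z"
    using Zf Yf by (simp add: sep_def)
  ultimately obtain W where W: "W \<in> C'" "W f = Zer" "\<And>g. W g \<noteq> Zer \<Longrightarrow> W g = Y g \<or> W g = ?Z g"
    using om_elim[OF om_extension YC elim_p(1)] by metis
  have W0: "W g = Zer" if "X g = Zer" "Y g = Zer" for g
    using W(3)[of g] elim_p(3)[OF that] that by auto
  have "W (I ! m) \<noteq> Zer"
  proof
    assume "W (I ! m) = Zer"
    then have "W = Y \<or> W = negv Y"
      using W0 Ym Xm W(1) YC
      by (intro edge_cocircuits_eq_or_neg[OF om_extension edge, of "I ! m"])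
        (auto simp: comp_def zset_def split: if_splits)
    then show False using W(2) Yf by auto
  qed
  then have "W (I ! m) = neg_sign (X (I ! m))"
    using W(3) Ym elim_p(4) by force
  moreover have "W p = W (I ! m)"
    by (rule sign_on_edge_hyperplane[OF fE Yf W(1,2) \<open>W (I ! m) \<noteq> Zer\<close> W0])
  moreover have "X p = X (I ! m)"
    by (rule lex_extension_sign_eq_nth_of_nonzero[OF ext IE m Xm beforeX XC Xp(2)])
  ultimately have "W p = neg_sign (X p)"
    by simp
  then show False
    using W(3)[of p] elim_p(2) Xp by auto
qed

lemma elim_p_at:
  assumes "f \<in> E" "Y f \<noteq> Zer"
  shows "elim C' p (negv X) Y f = Y f"
  using elim_p_at_ne_Zer[OF assms] elim_p_at_ne_neg[OF assms] assms(2)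
  by (cases "elim C' p (negv X) Y f"; cases "Y f") auto

end

theorem lemma3p6:
  fixes E :: "'e set" and C C' :: "'e svec set" and p f :: 'e and I :: "'e list"
    and X Y :: "'e svec" and r i j :: nat
  assumes OM: "oriented_matroid E C"
    and rk: "r = om_rank E C"
    and fE: "f \<in> E"
    and I_dist: "distinct I" and I_sub: "set I \<subseteq> E" and I_ind: "indep E C (set I)"
    and k_le: "length I \<le> r"
    and ext: "lex_extension E C I p C'"
    and XC: "X \<in> C'" and YC: "Y \<in> C'"
    and conf: "conformal X Y"
    and Xp: "X p = Y p" "X p \<noteq> Zer"
    and edge: "is_edge (insert p E) C' (comp X Y)"
    and Yf: "Y f \<noteq> Zer"
    and ij: "i = cc_index I X" "j = cc_index I Y" "1 \<le> i" "i < j" "j \<le> length I"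
  shows "Dir C' p f X Y = Dir C' (I ! (i - 1)) f X Y \<and> Dir C' (I ! (i - 1)) f X Y = Y f"
proof -
  define m where "m = i - 1"
  have m: "m < length I" "m < j - 1"
    using ij by (auto simp: m_def)
  have Xm: "X (I ! m) \<noteq> Zer" and beforeX: "\<And>l. l < m \<Longrightarrow> X (I ! l) = Zer"
    using cc_index_first_nonzero[of I X] ij by (auto simp: m_def)
  have beforeY: "\<And>l. l < j - 1 \<Longrightarrow> Y (I ! l) = Zer"
    using cc_index_first_nonzero[of I Y] ij by auto
  interpret lex_extension_conformal_edge E C C' I p X Y m
    using ext I_sub m XC YC conf edge Xp Xm beforeX beforeY
    by unfold_locales auto
  have "Dir C' (I ! m) f X Y = Y f"
    using Xm Ym by (simp add: Dir_def)
  moreover have "Dir C' p f X Y = Y f"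
    using Xp elim_p_at[OF fE Yf] by (simp add: Dir_def)
  ultimately show ?thesis
    by (simp add: m_def)
qed

end
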